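(* Let $[X,d,m]$ be a metric random walk space with invariant and reversible measure $\nu$, $\nu(X)<+\infty$. The following are equivalent: (1) $\Delta_m$ is ergodic; (2) if $D$ is $\nu$-measurable and $\Delta_m\chi_D=0$ $\nu$-a.e., then $\chi_D$ is $\nu$-a.e. constant; (3) $P_m(D)>0$ for every $\nu$-measurable $D$ with $0<\nu(D)<\nu(X)$; (4) for every $\nu$-measurable $D$ with $0<\nu(D)<\nu(X)$, $\displaystyle\frac1{\nu(D)}\int_D\mathcal H^m_{\partial D}(x)\,d\nu(x)>-1$.
   Context: A metric random walk space $[X,d,m]$ is a Polish metric space $(X,d)$ with a family $m=(m_x)_{x\in X}$ of Borel probability measures, $x\mapsto m_x(A)$ Borel measurable, each with finite first moment. A Radon measure $\nu$ is invariant if $\nu(A)=\int_X m_x(A)d\nu(x)$ for all $\nu$-measurable $A$, reversible if $dm_x(y)d\nu(x)=dm_y(x)d\nu(y)$. Laplacian: $\Delta_m f(x)=\int_X(f(y)-f(x))dm_x(y)$ on $L^1\cap L^2(X,\nu)$; $\Delta_m$ is ergodic if $\Delta_m u=0$ implies $u$ is $\nu$-a.e. constant. The $m$-perimeter of a $\nu$-measurable $E$ is $P_m(E)=\int_E\int_{X\setminus E}dm_x(y)\,d\nu(x)$, and the $m$-mean curvature of $\partial E$ at $x\in X$ is $\mathcal H^m_{\partial E}(x)=1-2\int_E dm_x(y)=1-2m_x(E)$. *)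

theory Defs
  imports "HOL-Probability.Probability"
begin

definition metric_random_walk_space ::
  "('a::{polish_space,metric_space} \<Rightarrow> 'a measure) \<Rightarrow> bool" where
  "metric_random_walk_space m \<longleftrightarrow>
     (\<forall>x. prob_space (m x) \<and> sets (m x) = sets borel) \<and>
     (\<forall>A \<in> sets borel. (\<lambda>x. emeasure (m x) A) \<in> borel_measurable borel) \<and>
     (\<forall>x. integrable (m x) (\<lambda>y. dist x y))"

definition invariant_measure :: "('a \<Rightarrow> 'a measure) \<Rightarrow> 'a measure \<Rightarrow> bool" where
  "invariant_measure m \<nu> \<longleftrightarrow>
     (\<forall>A \<in> sets \<nu>. emeasure \<nu> A = (\<integral>\<^sup>+ x. emeasure (m x) A \<partial>\<nu>))"

text \<open>nu is reversible: the measures dm_x(y) d nu(x) and dm_y(x) d nu(y) on X \<times> X coincide.\<close>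
definition reversible_measure :: "('a \<Rightarrow> 'a measure) \<Rightarrow> 'a measure \<Rightarrow> bool" where
  "reversible_measure m \<nu> \<longleftrightarrow>
     (\<forall>C \<in> sets (\<nu> \<Otimes>\<^sub>M \<nu>).
        (\<integral>\<^sup>+ x. (\<integral>\<^sup>+ y. indicator C (x, y) \<partial>(m x)) \<partial>\<nu>) =
        (\<integral>\<^sup>+ x. (\<integral>\<^sup>+ y. indicator C (y, x) \<partial>(m x)) \<partial>\<nu>))"

definition laplacian_m :: "('a \<Rightarrow> 'a measure) \<Rightarrow> ('a \<Rightarrow> real) \<Rightarrow> 'a \<Rightarrow> real" where
  "laplacian_m m f x = (\<integral> y. (f y - f x) \<partial>(m x))"

definition ergodic_m :: "('a \<Rightarrow> 'a measure) \<Rightarrow> 'a measure \<Rightarrow> bool" where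
  "ergodic_m m \<nu> \<longleftrightarrow>
     (\<forall>u. u \<in> borel_measurable \<nu> \<and> integrable \<nu> u \<and> integrable \<nu> (\<lambda>x. (u x)\<^sup>2) \<and>
          (AE x in \<nu>. laplacian_m m u x = 0) \<longrightarrow> (\<exists>c. AE x in \<nu>. u x = c))"

definition m_perimeter :: "('a \<Rightarrow> 'a measure) \<Rightarrow> 'a measure \<Rightarrow> 'a set \<Rightarrow> ennreal" where
  "m_perimeter m \<nu> E = (\<integral>\<^sup>+ x. indicator E x * emeasure (m x) (space \<nu> - E) \<partial>\<nu>)"

definition m_mean_curvature :: "('a \<Rightarrow> 'a measure) \<Rightarrow> 'a set \<Rightarrow> 'a \<Rightarrow> real" where
  "m_mean_curvature m E x = 1 - 2 * measure (m x) E"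

end

theory Submission
  imports Defs
begin

text \<open>
  Ergodicity gives (2) at once, indicators being in L1 and L2. If P_m(D) = 0, reversibility
  gives P_m(X - D) = 0 as well, so for almost every x the measure m_x lives on the side of D
  containing x; then the Laplacian of the indicator of D vanishes a.e., and by (2) the set D
  is null or conull. Conversely, if the Laplacian of u vanishes then u(x) is the m_x-mean
  of u, and invariance of \<nu> turns the integrated variance
  \<integral>\<integral>(u(y) - u(x))^2 dm_x(y) d\<nu>(x) into \<integral>u^2 d\<nu> - \<integral>u^2 d\<nu> = 0. Hence u is constant along
  the steps of the walk, so every preimage of a Borel set under u has zero perimeter and by
  (3) is null or conull, which forces u to equal its mean a.e. Finally (3) and (4) are
  equivalent because the integral of the mean curvature over D equals 2 P_m(D) - \<nu>(D).
\<close>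

lemma (in finite_measure) AE_notin_iff_measure_eq_0:
  "D \<in> sets M \<Longrightarrow> (AE x in M. x \<notin> D) \<longleftrightarrow> measure M D = 0"
  by (simp add: AE_iff_null_sets[symmetric] null_sets_def emeasure_eq_measure)

lemma (in finite_measure) AE_in_iff_measure_eq_space:
  assumes "D \<in> sets M"
  shows "(AE x in M. x \<in> D) \<longleftrightarrow> measure M D = measure M (space M)"
proof -
  have "(AE x in M. x \<in> D) \<longleftrightarrow> (AE x in M. x \<notin> space M - D)"
    by (intro AE_cong) auto
  also have "\<dots> \<longleftrightarrow> measure M (space M - D) = 0"
    using assms by (intro AE_notin_iff_measure_eq_0) auto
  finally show ?thesis
    using finite_measure_compl[OF assms] by auto
qed

lemma (in finite_measure) measure_trivial_if_indicator_AE_eq: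
  assumes D: "D \<in> sets M" and c: "AE x in M. (indicator D x :: real) = c"
  shows "measure M D = 0 \<or> measure M D = measure M (space M)"
proof (cases "c = 1")
  case True
  from c have "AE x in M. x \<in> D"
    by eventually_elim (use True in \<open>auto simp: indicator_def\<close>)
  then show ?thesis using AE_in_iff_measure_eq_space[OF D] by simp
next
  case False
  from c have "AE x in M. x \<notin> D"
    by eventually_elim (use False in \<open>auto simp: indicator_def\<close>)
  then show ?thesis using AE_notin_iff_measure_eq_0[OF D] by simp
qed

lemma (in finite_measure) AE_eq_const_if_preimages_trivial:
  fixes u :: "'a \<Rightarrow> real"
  assumes u: "integrable M u"
    and trivial: "\<And>S. S \<in> sets borel \<Longrightarrow>
      measure M (u -` S \<inter> space M) = 0 \<or> measure M (u -` S \<inter> space M) = measure M (space M)"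
  shows "\<exists>c. AE x in M. u x = c"
proof -
  \<comment> \<open>a conull superlevel or sublevel set of the mean would move the integral off the mean\<close>
  define c where "c = integral\<^sup>L M u / measure M (space M)"
  have sets: "u -` S \<inter> space M \<in> sets M" if "S \<in> sets borel" for S
    using u that by (simp add: borel_measurable_integrable measurable_sets)
  have nonnull_imp_full: "emeasure M (space M) \<noteq> 0 \<and> (AE x in M. u x \<in> S)"
    if S: "S \<in> sets borel" and "measure M (u -` S \<inter> space M) \<noteq> 0" for S
  proof
    have full: "measure M (u -` S \<inter> space M) = measure M (space M)"
      using trivial[OF S] that(2) by blast
    then show "emeasure M (space M) \<noteq> 0"
      using that(2) by (simp add: emeasure_eq_measure)
    have "AE x in M. x \<in> u -` S \<inter> space M"
      using full AE_in_iff_measure_eq_space[OF sets[OF S]] by simp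
    then show "AE x in M. u x \<in> S" by eventually_elim simp
  qed
  have mean: "integral\<^sup>L M (\<lambda>_. c) = integral\<^sup>L M u" if "emeasure M (space M) \<noteq> 0"
    using that by (simp add: c_def emeasure_eq_measure)
  have "measure M (u -` {c<..} \<inter> space M) = 0"
  proof (rule ccontr)
    assume "measure M (u -` {c<..} \<inter> space M) \<noteq> 0"
    with nonnull_imp_full[of "{c<..}"]
    have pos: "emeasure M (space M) \<noteq> 0" and "AE x in M. c < u x" by auto
    then have "integral\<^sup>L M (\<lambda>_. c) < integral\<^sup>L M u"
      by (intro integral_less_AE_space[OF _ u]) auto
    with mean[OF pos] show False by simp
  qed
  moreover have "measure M (u -` {..<c} \<inter> space M) = 0"
  proof (rule ccontr)
    assume "measure M (u -` {..<c} \<inter> space M) \<noteq> 0"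
    with nonnull_imp_full[of "{..<c}"]
    have pos: "emeasure M (space M) \<noteq> 0" and "AE x in M. u x < c" by auto
    then have "integral\<^sup>L M u < integral\<^sup>L M (\<lambda>_. c)"
      by (intro integral_less_AE_space[OF u]) auto
    with mean[OF pos] show False by simp
  qed
  ultimately have "AE x in M. x \<notin> u -` {c<..} \<inter> space M" "AE x in M. x \<notin> u -` {..<c} \<inter> space M"
    by (simp_all only: AE_notin_iff_measure_eq_0 sets borel_open open_greaterThan open_lessThan)
  with AE_space have "AE x in M. u x = c" by eventually_elim auto
  then show ?thesis ..
qed

locale invariant_random_walk =
  fixes m :: "'a::{polish_space,metric_space} \<Rightarrow> 'a measure"
    and \<nu> :: "'a measure"
  assumes random_walk: "metric_random_walk_space m"
    and sets_\<nu>: "sets \<nu> = sets borel"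
    and invariant: "invariant_measure m \<nu>"
begin

declare sets_\<nu> [measurable_cong]

lemma space_\<nu> [simp]: "space \<nu> = UNIV"
  using sets_eq_imp_space_eq[OF sets_\<nu>] by simp

lemma prob_space_m: "prob_space (m x)"
  and sets_m [measurable_cong]: "sets (m x) = sets borel"
  using random_walk unfolding metric_random_walk_space_def by auto

lemma space_m [simp]: "space (m x) = UNIV"
  using sets_eq_imp_space_eq[OF sets_m] by simp

lemma measurable_emeasure_m [measurable]:
  "A \<in> sets borel \<Longrightarrow> (\<lambda>x. emeasure (m x) A) \<in> borel_measurable \<nu>"
  using random_walk unfolding metric_random_walk_space_def
  by (simp add: measurable_cong_sets[OF sets_\<nu> refl])

lemma measure_m_le_1 [simp]: "measure (m x) A \<le> 1"
  using prob_space.prob_le_1[OF prob_space_m] .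

lemma measurable_measure_m [measurable]:
  "A \<in> sets borel \<Longrightarrow> (\<lambda>x. measure (m x) A) \<in> borel_measurable \<nu>"
  unfolding measure_def by (intro borel_measurable_enn2real measurable_emeasure_m)

lemma measurable_m: "m \<in> measurable \<nu> (subprob_algebra borel)"
  by (rule measurable_subprob_algebra)
     (auto simp: prob_space_m prob_space_imp_subprob_space sets_m)

lemma bind_m: "\<nu> \<bind> m = \<nu>"
proof (rule measure_eqI)
  show "sets (\<nu> \<bind> m) = sets \<nu>"
    using sets_m sets_\<nu> by simp
  fix A assume "A \<in> sets (\<nu> \<bind> m)"
  then have A: "A \<in> sets borel" using sets_m by simp
  have "emeasure (\<nu> \<bind> m) A = \<integral>\<^sup>+x. emeasure (m x) A \<partial>\<nu>"
    by (rule emeasure_bind[OF _ measurable_m A]) simp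
  also have "\<dots> = emeasure \<nu> A"
    using invariant A sets_\<nu> unfolding invariant_measure_def by simp
  finally show "emeasure (\<nu> \<bind> m) A = emeasure \<nu> A" .
qed

lemma nn_integral_m:
  "f \<in> borel_measurable borel \<Longrightarrow> (\<integral>\<^sup>+x. \<integral>\<^sup>+y. f y \<partial>m x \<partial>\<nu>) = integral\<^sup>N \<nu> f"
  using nn_integral_bind[OF _ measurable_m] bind_m by simp

lemma AE_integrable_m:
  fixes f :: "'a \<Rightarrow> real"
  assumes f: "integrable \<nu> f"
  shows "AE x in \<nu>. integrable (m x) f"
proof -
  have [measurable]: "f \<in> borel_measurable borel"
    using f measurable_cong_sets[OF sets_\<nu> refl] by auto
  have "(\<integral>\<^sup>+x. \<integral>\<^sup>+y. ennreal (norm (f y)) \<partial>m x \<partial>\<nu>) \<noteq> \<infinity>"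
    using f by (simp add: nn_integral_m integrable_iff_bounded)
  then have "AE x in \<nu>. (\<integral>\<^sup>+y. ennreal (norm (f y)) \<partial>m x) \<noteq> \<infinity>"
    by (intro nn_integral_PInf_AE nn_integral_measurable_subprob_algebra2[OF _ measurable_m])
       measurable
  then show ?thesis
    by eventually_elim
       (simp add: integrable_iff_bounded less_top measurable_cong_sets[OF sets_m refl])
qed

lemma laplacian_m_eq:
  assumes "integrable (m x) f"
  shows "laplacian_m m f x = (\<integral>y. f y \<partial>m x) - f x"
proof -
  interpret prob_space "m x" by (rule prob_space_m)
  show ?thesis
    using assms prob_space by (simp add: laplacian_m_def Bochner_Integration.integral_diff)
qed

lemma laplacian_m_indicator:
  "D \<in> sets borel \<Longrightarrow> laplacian_m m (indicator D) x = measure (m x) D - indicator D x"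
proof -
  interpret prob_space "m x" by (rule prob_space_m)
  assume "D \<in> sets borel"
  then have "integrable (m x) (indicator D :: 'a \<Rightarrow> real)"
    by (simp add: sets_m less_top[symmetric])
  then show ?thesis
    using \<open>D \<in> sets borel\<close> by (simp add: laplacian_m_eq sets_m)
qed

lemma nn_integral_square_increment:
  fixes u :: "'a \<Rightarrow> real"
  assumes u: "integrable (m x) u" and u2: "integrable (m x) (\<lambda>y. (u y)\<^sup>2)"
    and harmonic: "laplacian_m m u x = 0"
  shows "(\<integral>\<^sup>+y. ennreal ((u y - u x)\<^sup>2) \<partial>m x) + ennreal ((u x)\<^sup>2) = (\<integral>\<^sup>+y. ennreal ((u y)\<^sup>2) \<partial>m x)"
proof -
  interpret prob_space "m x" by (rule prob_space_m)
  have mean: "expectation u = u x"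
    using harmonic laplacian_m_eq[OF u] by simp
  have "integrable (m x) (\<lambda>y. (u y)\<^sup>2 - 2 * u x * u y + (u x)\<^sup>2)"
    using u u2 by simp
  then have increment: "integrable (m x) (\<lambda>y. (u y - u x)\<^sup>2)"
    by (simp add: power2_diff algebra_simps)
  have "variance u = expectation (\<lambda>y. (u y)\<^sup>2) - (u x)\<^sup>2"
    using variance_eq[OF u u2] mean by simp
  with mean have "(\<integral>y. (u y - u x)\<^sup>2 \<partial>m x) + (u x)\<^sup>2 = (\<integral>y. (u y)\<^sup>2 \<partial>m x)"
    by simp
  then show ?thesis
    by (simp add: nn_integral_eq_integral increment u2 ennreal_plus[symmetric] integral_nonneg_AE
        del: ennreal_plus)
qed

lemma harmonic_imp_AE_AE_eq:
  fixes u :: "'a \<Rightarrow> real"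
  assumes u: "integrable \<nu> u" and u2: "integrable \<nu> (\<lambda>x. (u x)\<^sup>2)"
    and harmonic: "AE x in \<nu>. laplacian_m m u x = 0"
  shows "AE x in \<nu>. AE y in m x. u y = u x"
proof -
  have [measurable]: "u \<in> borel_measurable borel"
    using u measurable_cong_sets[OF sets_\<nu> refl] by auto
  define F where "F x = (\<integral>\<^sup>+y. ennreal ((u y - u x)\<^sup>2) \<partial>m x)" for x
  have [measurable]: "F \<in> borel_measurable \<nu>"
    unfolding F_def by (rule nn_integral_measurable_subprob_algebra2[OF _ measurable_m]) measurable
  \<comment> \<open>integrating the pointwise variance identity, invariance cancels the second moments\<close>
  have "AE x in \<nu>. F x + ennreal ((u x)\<^sup>2) = (\<integral>\<^sup>+y. ennreal ((u y)\<^sup>2) \<partial>m x)"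
    using AE_integrable_m[OF u] AE_integrable_m[OF u2] harmonic
    by eventually_elim (simp add: F_def nn_integral_square_increment)
  then have "(\<integral>\<^sup>+x. ennreal ((u x)\<^sup>2) \<partial>\<nu>) + (\<integral>\<^sup>+x. F x \<partial>\<nu>)
      = (\<integral>\<^sup>+x. \<integral>\<^sup>+y. ennreal ((u y)\<^sup>2) \<partial>m x \<partial>\<nu>)"
    by (simp add: nn_integral_add[symmetric] add.commute cong: nn_integral_cong_AE)
  also have "\<dots> = (\<integral>\<^sup>+x. ennreal ((u x)\<^sup>2) \<partial>\<nu>) + 0"
    by (simp add: nn_integral_m)
  finally have "(\<integral>\<^sup>+x. F x \<partial>\<nu>) = 0"
    using u2 by (auto simp: integrable_iff_bounded ennreal_add_left_cancel)
  then have "AE x in \<nu>. F x = 0"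
    by (simp add: nn_integral_0_iff_AE)
  then show ?thesis
  proof eventually_elim
    case (elim x)
    then have "AE y in m x. ennreal ((u y - u x)\<^sup>2) = 0"
      by (simp add: F_def nn_integral_0_iff_AE measurable_cong_sets[OF sets_m refl])
    then show ?case by eventually_elim simp
  qed
qed

lemma m_perimeter_eq_0_iff:
  assumes "D \<in> sets \<nu>"
  shows "m_perimeter m \<nu> D = 0 \<longleftrightarrow> (AE x in \<nu>. x \<in> D \<longrightarrow> emeasure (m x) (UNIV - D) = 0)"
  unfolding m_perimeter_def using assms
  by (subst nn_integral_0_iff_AE) (auto simp: indicator_def sets_\<nu>)

lemma m_perimeter_preimage_eq_0:
  assumes u: "u \<in> borel_measurable borel"
    and steps: "AE x in \<nu>. AE y in m x. u y = u x"
    and S: "S \<in> sets borel"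
  shows "m_perimeter m \<nu> (u -` S) = 0"
proof -
  have D: "u -` S \<in> sets borel"
    using measurable_sets[OF u S] by simp
  from steps have "AE x in \<nu>. x \<in> u -` S \<longrightarrow> emeasure (m x) (UNIV - u -` S) = 0"
  proof eventually_elim
    case (elim x)
    show ?case
    proof
      assume "x \<in> u -` S"
      from elim have "AE y in m x. y \<notin> UNIV - u -` S"
        by eventually_elim (use \<open>x \<in> u -` S\<close> in auto)
      then show "emeasure (m x) (UNIV - u -` S) = 0"
        using D by (subst (asm) AE_iff_measurable[where N="UNIV - u -` S"]) (auto simp: sets_m)
    qed
  qed
  then show ?thesis
    using D m_perimeter_eq_0_iff sets_\<nu> by simp
qed

lemma m_perimeter_Compl:
  assumes rev: "reversible_measure m \<nu>" and D: "D \<in> sets \<nu>"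
  shows "m_perimeter m \<nu> (UNIV - D) = m_perimeter m \<nu> D"
proof -
  have [measurable]: "D \<in> sets borel" using D sets_\<nu> by simp
  have "D \<times> (UNIV - D) \<in> sets (\<nu> \<Otimes>\<^sub>M \<nu>)" using D by auto
  with rev have "(\<integral>\<^sup>+x. \<integral>\<^sup>+y. indicator (D \<times> (UNIV - D)) (y, x) \<partial>m x \<partial>\<nu>)
      = (\<integral>\<^sup>+x. \<integral>\<^sup>+y. indicator (D \<times> (UNIV - D)) (x, y) \<partial>m x \<partial>\<nu>)"
    unfolding reversible_measure_def by simp
  moreover have "(\<integral>\<^sup>+y. indicator (D \<times> (UNIV - D)) (x, y) \<partial>m x)
      = indicator D x * emeasure (m x) (UNIV - D)" for x
    by (simp add: indicator_times nn_integral_cmult_indicator sets_m)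
  moreover have "(\<integral>\<^sup>+y. indicator (D \<times> (UNIV - D)) (y, x) \<partial>m x)
      = indicator (UNIV - D) x * emeasure (m x) (UNIV - (UNIV - D))" for x
    by (simp add: indicator_times nn_integral_multc sets_m Diff_Diff_Int mult.commute)
  ultimately show ?thesis
    by (simp add: m_perimeter_def)
qed

lemma laplacian_indicator_AE_eq_0_if_m_perimeter_eq_0:
  assumes rev: "reversible_measure m \<nu>" and D: "D \<in> sets \<nu>" and P: "m_perimeter m \<nu> D = 0"
  shows "AE x in \<nu>. laplacian_m m (indicator D) x = 0"
proof -
  have Dc: "UNIV - D \<in> sets \<nu>" using D by (metis sets.compl_sets space_\<nu>)
  have "AE x in \<nu>. x \<in> D \<longrightarrow> emeasure (m x) (UNIV - D) = 0"
    using P m_perimeter_eq_0_iff[OF D] by simp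
  moreover have "AE x in \<nu>. x \<notin> D \<longrightarrow> emeasure (m x) D = 0"
    using P m_perimeter_eq_0_iff[OF Dc] m_perimeter_Compl[OF rev D] by (simp add: Diff_Diff_Int)
  ultimately show ?thesis
  proof eventually_elim
    case (elim x)
    interpret prob_space "m x" by (rule prob_space_m)
    have "measure (m x) D = indicator D x"
      using elim prob_compl[of D] D
      by (cases "x \<in> D") (auto simp: measure_def sets_m sets_\<nu>)
    then show ?case
      using D by (simp add: laplacian_m_indicator sets_\<nu>)
  qed
qed

end

locale finite_invariant_random_walk = invariant_random_walk +
  assumes finite_\<nu>: "emeasure \<nu> (space \<nu>) < \<infinity>"
begin

sublocale finite_measure \<nu>
  using finite_\<nu> by (intro finite_measureI) auto

lemma integrable_indicator_\<nu> [simp]: "D \<in> sets \<nu> \<Longrightarrow> integrable \<nu> (indicator D :: 'a \<Rightarrow> real)"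
  by (simp add: less_top[symmetric])

lemma integrable_indicator_measure_m:
  assumes "D \<in> sets borel"
  shows "integrable \<nu> (\<lambda>x. indicator D x * measure (m x) D)"
proof (rule integrable_const_bound[where B=1])
  show "AE x in \<nu>. norm (indicator D x * measure (m x) D) \<le> 1"
    by (simp add: indicator_def)
qed (use assms in measurable)

lemma m_perimeter_eq:
  assumes D: "D \<in> sets \<nu>"
  shows "m_perimeter m \<nu> D = ennreal (measure \<nu> D - (\<integral>x\<in>D. measure (m x) D \<partial>\<nu>))"
proof -
  have Db: "D \<in> sets borel" using D sets_\<nu> by simp
  have "indicator D x * emeasure (m x) (UNIV - D) = ennreal (indicator D x * (1 - measure (m x) D))"
    for x
  proof -
    interpret prob_space "m x" by (rule prob_space_m)
    show ?thesis
      using prob_compl[of D] Db by (simp add: emeasure_eq_measure sets_m indicator_def)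
  qed
  then have "m_perimeter m \<nu> D = (\<integral>\<^sup>+x. ennreal (indicator D x * (1 - measure (m x) D)) \<partial>\<nu>)"
    by (simp add: m_perimeter_def)
  also have "\<dots> = ennreal (\<integral>x. indicator D x * (1 - measure (m x) D) \<partial>\<nu>)"
    using D integrable_indicator_measure_m[OF Db]
    by (intro nn_integral_eq_integral AE_I2) (simp_all add: algebra_simps, simp add: indicator_def)
  also have "(\<integral>x. indicator D x * (1 - measure (m x) D) \<partial>\<nu>)
      = measure \<nu> D - (\<integral>x\<in>D. measure (m x) D \<partial>\<nu>)"
    using D integrable_indicator_measure_m[OF Db]
    by (simp add: set_lebesgue_integral_def algebra_simps)
  finally show ?thesis .
qed

lemma set_integral_m_mean_curvature:
  assumes D: "D \<in> sets \<nu>"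
  shows "(\<integral>x\<in>D. m_mean_curvature m D x \<partial>\<nu>) = measure \<nu> D - 2 * (\<integral>x\<in>D. measure (m x) D \<partial>\<nu>)"
proof -
  have "(\<integral>x\<in>D. m_mean_curvature m D x \<partial>\<nu>)
      = (\<integral>x. indicator D x - 2 * (indicator D x * measure (m x) D) \<partial>\<nu>)"
    unfolding set_lebesgue_integral_def m_mean_curvature_def by (simp add: algebra_simps)
  also have "\<dots> = measure \<nu> D - 2 * (\<integral>x\<in>D. measure (m x) D \<partial>\<nu>)"
    using D integrable_indicator_measure_m[of D] sets_\<nu>
    by (simp add: set_lebesgue_integral_def Bochner_Integration.integral_diff)
  finally show ?thesis .
qed

lemma m_perimeter_pos_iff_mean_curvature_gt:
  assumes D: "D \<in> sets \<nu>" and pos: "0 < measure \<nu> D"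
  shows "m_perimeter m \<nu> D > 0 \<longleftrightarrow> (1 / measure \<nu> D) * (\<integral>x\<in>D. m_mean_curvature m D x \<partial>\<nu>) > -1"
  using pos by (simp add: m_perimeter_eq[OF D] set_integral_m_mean_curvature[OF D] field_simps)

lemma ergodic_m_imp_indicator_AE_const:
  assumes "ergodic_m m \<nu>" "D \<in> sets \<nu>" "AE x in \<nu>. laplacian_m m (indicator D) x = 0"
  shows "\<exists>c. AE x in \<nu>. (indicator D x :: real) = c"
proof -
  have "(\<lambda>x. (indicator D x :: real)\<^sup>2) = indicator D"
    by (auto simp: indicator_def)
  with assms show ?thesis
    unfolding ergodic_m_def by (metis borel_measurable_indicator integrable_indicator_\<nu>)
qed

lemma m_perimeter_pos_if_indicator_AE_const:
  assumes rev: "reversible_measure m \<nu>"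
    and indicator_const: "\<forall>D \<in> sets \<nu>. (AE x in \<nu>. laplacian_m m (indicator D) x = 0)
      \<longrightarrow> (\<exists>c. AE x in \<nu>. (indicator D x :: real) = c)"
    and D: "D \<in> sets \<nu>" and nontrivial: "0 < measure \<nu> D" "measure \<nu> D < measure \<nu> (space \<nu>)"
  shows "m_perimeter m \<nu> D > 0"
proof (rule ccontr)
  assume "\<not> m_perimeter m \<nu> D > 0"
  then have "AE x in \<nu>. laplacian_m m (indicator D) x = 0"
    by (intro laplacian_indicator_AE_eq_0_if_m_perimeter_eq_0[OF rev D]) (simp add: not_gr_zero)
  with indicator_const D obtain c where "AE x in \<nu>. (indicator D x :: real) = c"
    by blast
  with nontrivial show False
    using measure_trivial_if_indicator_AE_eq[OF D] by auto
qed

lemma ergodic_m_if_m_perimeter_pos: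
  assumes perimeter_pos: "\<forall>D \<in> sets \<nu>. 0 < measure \<nu> D \<and> measure \<nu> D < measure \<nu> (space \<nu>)
      \<longrightarrow> m_perimeter m \<nu> D > 0"
  shows "ergodic_m m \<nu>"
  unfolding ergodic_m_def
proof (intro allI impI, elim conjE)
  fix u :: "'a \<Rightarrow> real"
  assume "u \<in> borel_measurable \<nu>" and u: "integrable \<nu> u" "integrable \<nu> (\<lambda>x. (u x)\<^sup>2)"
    and harmonic: "AE x in \<nu>. laplacian_m m u x = 0"
  then have u_borel: "u \<in> borel_measurable borel"
    using measurable_cong_sets[OF sets_\<nu> refl] by simp
  have steps: "AE x in \<nu>. AE y in m x. u y = u x"
    using harmonic_imp_AE_AE_eq[OF u harmonic] .
  show "\<exists>c. AE x in \<nu>. u x = c"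
  proof (rule AE_eq_const_if_preimages_trivial[OF u(1)])
    fix S :: "real set" assume S: "S \<in> sets borel"
    then have "u -` S \<in> sets \<nu>"
      using measurable_sets[OF u_borel S] sets_\<nu> by simp
    moreover have "\<not> m_perimeter m \<nu> (u -` S) > 0"
      using m_perimeter_preimage_eq_0[OF u_borel steps S] by simp
    ultimately have "\<not> (0 < measure \<nu> (u -` S) \<and> measure \<nu> (u -` S) < measure \<nu> (space \<nu>))"
      using perimeter_pos by blast
    moreover have "measure \<nu> (u -` S) \<le> measure \<nu> (space \<nu>)"
      by (rule bounded_measure)
    ultimately show "measure \<nu> (u -` S \<inter> space \<nu>) = 0
        \<or> measure \<nu> (u -` S \<inter> space \<nu>) = measure \<nu> (space \<nu>)"
      by (simp add: less_le)
  qed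
qed

end

theorem theorem2p24:
  fixes m :: "'a::{polish_space,metric_space} \<Rightarrow> 'a measure"
    and \<nu> :: "'a measure"
  assumes mrw: "metric_random_walk_space m"
    and sets_nu: "sets \<nu> = sets borel"
    and fin: "emeasure \<nu> (space \<nu>) < \<infinity>"
    and inv: "invariant_measure m \<nu>"
    and rev: "reversible_measure m \<nu>"
  shows "(ergodic_m m \<nu> \<longleftrightarrow>
           (\<forall>D \<in> sets \<nu>. (AE x in \<nu>. laplacian_m m (indicator D) x = 0)
               \<longrightarrow> (\<exists>c. AE x in \<nu>. (indicator D x :: real) = c)))
       \<and> (ergodic_m m \<nu> \<longleftrightarrow>
           (\<forall>D \<in> sets \<nu>. 0 < measure \<nu> D \<and> measure \<nu> D < measure \<nu> (space \<nu>)
               \<longrightarrow> m_perimeter m \<nu> D > 0))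
       \<and> (ergodic_m m \<nu> \<longleftrightarrow>
           (\<forall>D \<in> sets \<nu>. 0 < measure \<nu> D \<and> measure \<nu> D < measure \<nu> (space \<nu>)
               \<longrightarrow> (1 / measure \<nu> D) * (\<integral>x\<in>D. m_mean_curvature m D x \<partial>\<nu>) > -1))"
proof -
  interpret finite_invariant_random_walk m \<nu>
    using assms by unfold_locales
  have "ergodic_m m \<nu> \<Longrightarrow> (\<forall>D \<in> sets \<nu>. (AE x in \<nu>. laplacian_m m (indicator D) x = 0)
      \<longrightarrow> (\<exists>c. AE x in \<nu>. (indicator D x :: real) = c))"
    using ergodic_m_imp_indicator_AE_const by blast
  moreover note m_perimeter_pos_if_indicator_AE_const[OF rev] ergodic_m_if_m_perimeter_pos
  moreover have "(\<forall>D \<in> sets \<nu>. 0 < measure \<nu> D \<and> measure \<nu> D < measure \<nu> (space \<nu>)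
      \<longrightarrow> m_perimeter m \<nu> D > 0)
    \<longleftrightarrow> (\<forall>D \<in> sets \<nu>. 0 < measure \<nu> D \<and> measure \<nu> D < measure \<nu> (space \<nu>)
      \<longrightarrow> (1 / measure \<nu> D) * (\<integral>x\<in>D. m_mean_curvature m D x \<partial>\<nu>) > -1)"
    using m_perimeter_pos_iff_mean_curvature_gt by auto
  ultimately show ?thesis
    by blast
qed

end
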